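(* Let $E,F,G$ be Banach spaces over $\mathbb{K}$. (a) Let $P\in\mathcal{P}(^mE;F)$ be a surjective polynomial. If either $n=1$, or $n$ is odd and $\mathbb{K}=\mathbb{R}$, then $\Delta^n_kP$ is injective for every $k\in\mathbb{N}$. (b) If $j\colon G\to E$ is a metric surjection, then $\Delta^1_kj\colon\mathcal{P}(^kE)\to\mathcal{P}(^kG)$ is a metric injection for every $k\in\mathbb{N}$. (c) If $u\in\mathcal{L}(E;F)$ is an isomorphism (respectively, an isometric isomorphism), then for every $k\in\mathbb{N}$, $\Delta^1_ku$ is an isomorphism (respectively, an isometric isomorphism) and $(\Delta^1_ku)^{-1}=\Delta^1_k(u^{-1})$.
   Context: Banach spaces are over $\mathbb{K}=\mathbb{R}$ or $\mathbb{C}$. $\mathcal{P}(^jX;Y)$ is the Banach space of continuous $j$-homogeneous polynomials $X\to Y$ with sup norm, $\mathcal{P}(^jX)=\mathcal{P}(^jX;\mathbb{K})$, and $\mathcal{L}(X;Y)$ the bounded linear operators (linear operators are $1$-homogeneous polynomials). For $P\in\mathcal{P}(^mE;F)$ and $n,k\in\mathbb{N}$, $\Delta^n_kP\colon\mathcal{P}(^kF)\to\mathcal{P}(^{mnk}E)$ is defined by $\Delta^n_kP(q)(x)=q(P(x))^n$. A metric surjection is a bounded linear operator $j\colon G\to E$ mapping the open unit ball of $G$ onto the open unit ball of $E$; a metric injection is a linear isometric embedding. *)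

theory Defs
  imports "HOL-Analysis.Analysis"
begin

text \<open>The distribution has no complex vector spaces; a complex Banach space is a
real Banach space carrying a complex scalar multiplication compatible with the
real one and with the norm.\<close>

class cscale =
  fixes cscale :: "complex \<Rightarrow> 'a \<Rightarrow> 'a"

class cbanach = cscale + banach +
  assumes cscale_add_right: "cscale a (x + y) = cscale a x + cscale a y"
    and cscale_add_left: "cscale (a + b) x = cscale a x + cscale b x"
    and cscale_cscale: "cscale a (cscale b x) = cscale (a * b) x"
    and cscale_one: "cscale 1 x = x"
    and scaleR_cscale: "scaleR r x = cscale (complex_of_real r) x"
    and norm_cscale: "norm (cscale a x) = cmod a * norm x"

definition K_linear :: "('k \<Rightarrow> 'a::plus \<Rightarrow> 'a) \<Rightarrow> ('k \<Rightarrow> 'b::plus \<Rightarrow> 'b) \<Rightarrow> ('a \<Rightarrow> 'b) \<Rightarrow> bool" where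
  "K_linear sa sb f \<longleftrightarrow> (\<forall>x y. f (x + y) = f x + f y) \<and> (\<forall>c x. f (sa c x) = sb c (f x))"

definition bdd_K_linear :: "('k \<Rightarrow> 'a::real_normed_vector \<Rightarrow> 'a) \<Rightarrow> ('k \<Rightarrow> 'b::real_normed_vector \<Rightarrow> 'b) \<Rightarrow> ('a \<Rightarrow> 'b) \<Rightarrow> bool" where
  "bdd_K_linear sa sb f \<longleftrightarrow> K_linear sa sb f \<and> (\<exists>C. \<forall>x. norm (f x) \<le> C * norm x)"

text \<open>An m-linear map is a function of tuples (x_0,...,x_{m-1}) encoded as
functions nat => 'a depending only on the first m coordinates.\<close>

definition multilinear :: "('k \<Rightarrow> 'a::monoid_add \<Rightarrow> 'a) \<Rightarrow> ('k \<Rightarrow> 'b::plus \<Rightarrow> 'b) \<Rightarrow> nat \<Rightarrow> ((nat \<Rightarrow> 'a) \<Rightarrow> 'b) \<Rightarrow> bool" where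
  "multilinear sa sb m A \<longleftrightarrow>
     (\<forall>xs. A xs = A (\<lambda>i. if i < m then xs i else 0)) \<and>
     (\<forall>i<m. \<forall>xs. K_linear sa sb (\<lambda>y. A (xs(i := y))))"

definition ml_bounded :: "nat \<Rightarrow> ((nat \<Rightarrow> 'a::real_normed_vector) \<Rightarrow> 'b::real_normed_vector) \<Rightarrow> bool" where
  "ml_bounded m A \<longleftrightarrow> (\<exists>C. \<forall>xs. norm (A xs) \<le> C * (\<Prod>i<m. norm (xs i)))"

definition hpoly :: "('k \<Rightarrow> 'a::real_normed_vector \<Rightarrow> 'a) \<Rightarrow> ('k \<Rightarrow> 'b::real_normed_vector \<Rightarrow> 'b) \<Rightarrow> nat \<Rightarrow> ('a \<Rightarrow> 'b) \<Rightarrow> bool" where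
  "hpoly sa sb m P \<longleftrightarrow> (\<exists>A. multilinear sa sb m A \<and> ml_bounded m A \<and> (\<forall>x. P x = A (\<lambda>_. x)))"

definition Pspace :: "('k \<Rightarrow> 'a::real_normed_vector \<Rightarrow> 'a) \<Rightarrow> ('k \<Rightarrow> 'b::real_normed_vector \<Rightarrow> 'b) \<Rightarrow> nat \<Rightarrow> ('a \<Rightarrow> 'b) set" where
  "Pspace sa sb m = {P. hpoly sa sb m P}"

definition polynorm :: "('a::real_normed_vector \<Rightarrow> 'b::real_normed_vector) \<Rightarrow> real" where
  "polynorm P = Sup ((\<lambda>x. norm (P x)) ` {x. norm x \<le> 1})"

text \<open>Delta^n_k P (q) (x) = q(P x)^n; the index k only fixes the domain P(^k F).\<close>
definition Delta :: "nat \<Rightarrow> ('a \<Rightarrow> 'b) \<Rightarrow> ('b \<Rightarrow> 'k::monoid_mult) \<Rightarrow> ('a \<Rightarrow> 'k)" where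
  "Delta n P q = (\<lambda>x. (q (P x)) ^ n)"

definition lin_on :: "('x \<Rightarrow> 'k::comm_ring_1) set \<Rightarrow> (('x \<Rightarrow> 'k) \<Rightarrow> ('y \<Rightarrow> 'k)) \<Rightarrow> bool" where
  "lin_on A T \<longleftrightarrow>
     (\<forall>p\<in>A. \<forall>q\<in>A. T (\<lambda>x. p x + q x) = (\<lambda>y. T p y + T q y)) \<and>
     (\<forall>c. \<forall>p\<in>A. T (\<lambda>x. c * p x) = (\<lambda>y. c * T p y))"

definition op_bounded :: "('x::real_normed_vector \<Rightarrow> 'k::real_normed_vector) set \<Rightarrow> (('x \<Rightarrow> 'k) \<Rightarrow> ('y::real_normed_vector \<Rightarrow> 'k)) \<Rightarrow> bool" where
  "op_bounded A T \<longleftrightarrow> (\<exists>C. \<forall>p\<in>A. polynorm (T p) \<le> C * polynorm p)"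

definition metric_injection :: "('x::real_normed_vector \<Rightarrow> 'k::{real_normed_vector,comm_ring_1}) set \<Rightarrow> ('y::real_normed_vector \<Rightarrow> 'k) set \<Rightarrow> (('x \<Rightarrow> 'k) \<Rightarrow> ('y \<Rightarrow> 'k)) \<Rightarrow> bool" where
  "metric_injection A B T \<longleftrightarrow> lin_on A T \<and> T ` A \<subseteq> B \<and> (\<forall>p\<in>A. polynorm (T p) = polynorm p)"

definition lin_iso :: "('x::real_normed_vector \<Rightarrow> 'k::{real_normed_vector,comm_ring_1}) set \<Rightarrow> ('y::real_normed_vector \<Rightarrow> 'k) set \<Rightarrow> (('x \<Rightarrow> 'k) \<Rightarrow> ('y \<Rightarrow> 'k)) \<Rightarrow> bool" where
  "lin_iso A B T \<longleftrightarrow> lin_on A T \<and> bij_betw T A B \<and> op_bounded A T \<and> op_bounded B (inv_into A T)"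

definition isometric_iso :: "('x::real_normed_vector \<Rightarrow> 'k::{real_normed_vector,comm_ring_1}) set \<Rightarrow> ('y::real_normed_vector \<Rightarrow> 'k) set \<Rightarrow> (('x \<Rightarrow> 'k) \<Rightarrow> ('y \<Rightarrow> 'k)) \<Rightarrow> bool" where
  "isometric_iso A B T \<longleftrightarrow> lin_iso A B T \<and> (\<forall>p\<in>A. polynorm (T p) = polynorm p)"

definition metric_surjection :: "('k \<Rightarrow> 'a::real_normed_vector \<Rightarrow> 'a) \<Rightarrow> ('k \<Rightarrow> 'b::real_normed_vector \<Rightarrow> 'b) \<Rightarrow> ('a \<Rightarrow> 'b) \<Rightarrow> bool" where
  "metric_surjection sa sb j \<longleftrightarrow> bdd_K_linear sa sb j \<and> j ` ball 0 1 = ball 0 1"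

definition vec_iso :: "('k \<Rightarrow> 'a::real_normed_vector \<Rightarrow> 'a) \<Rightarrow> ('k \<Rightarrow> 'b::real_normed_vector \<Rightarrow> 'b) \<Rightarrow> ('a \<Rightarrow> 'b) \<Rightarrow> bool" where
  "vec_iso sa sb u \<longleftrightarrow> bdd_K_linear sa sb u \<and> bij u \<and> bdd_K_linear sb sa (inv u)"

definition vec_isometric_iso :: "('k \<Rightarrow> 'a::real_normed_vector \<Rightarrow> 'a) \<Rightarrow> ('k \<Rightarrow> 'b::real_normed_vector \<Rightarrow> 'b) \<Rightarrow> ('a \<Rightarrow> 'b) \<Rightarrow> bool" where
  "vec_isometric_iso sa sb u \<longleftrightarrow> vec_iso sa sb u \<and> (\<forall>x. norm (u x) = norm x)"

end

theory Submission
  imports Defs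
begin

text \<open>(a) \<open>\<Delta>\<^sup>n\<^sub>k P q\<close> is \<open>(q \<circ> P)\<^sup>n\<close>; surjectivity of \<open>P\<close> makes \<open>q \<mapsto> q \<circ> P\<close> injective and
for odd \<open>n\<close> the real power \<open>t \<mapsto> t\<^sup>n\<close> is injective.
(b) By homogeneity the sup norm of a polynomial over the closed unit ball equals its sup over
the open unit ball, and a metric surjection maps the open unit ball onto the open unit ball,
so \<open>q\<close> and \<open>q \<circ> j\<close> have the same norm.
(c) Composition with a bounded linear \<open>u\<close> multiplies the polynomial norm by at most
\<open>\<parallel>u\<parallel>\<^sup>k\<close>, and \<open>\<Delta>\<^sup>1\<^sub>k (u\<inverse>)\<close> inverts \<open>\<Delta>\<^sup>1\<^sub>k u\<close>; if \<open>u\<close> is isometric it maps the closed unit ball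
onto itself.\<close>

definition real_compatible :: "('k::real_normed_field \<Rightarrow> 'a::real_vector \<Rightarrow> 'a) \<Rightarrow> bool" where
  "real_compatible s \<longleftrightarrow> (\<forall>r x. s (of_real r) x = r *\<^sub>R x)"

lemma real_compatible_scaleR: "real_compatible (scaleR :: real \<Rightarrow> 'a::real_vector \<Rightarrow> 'a)"
  by (simp add: real_compatible_def)

lemma real_compatible_cscale: "real_compatible (cscale :: complex \<Rightarrow> 'a::cbanach \<Rightarrow> 'a)"
  by (simp add: real_compatible_def scaleR_cscale)

lemma Delta_one: "Delta 1 j q = (\<lambda>x. q (j x))"
  by (simp add: Delta_def)

text \<open>\<open>One_nat_def\<close> is a simp rule, so the simplifier only sees \<open>Delta (Suc 0)\<close>.\<close>

lemmas Delta_Suc_0 [simp] = Delta_one[unfolded One_nat_def]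

lemma lin_on_Delta_one: "lin_on A (Delta 1 j)"
  by (simp add: lin_on_def Delta_def)

lemma K_linear_zero:
  assumes "K_linear sa sb (f :: 'a::monoid_add \<Rightarrow> 'b::group_add)"
  shows "f 0 = 0"
proof -
  have "f (0 + 0) = f 0 + f 0" using assms unfolding K_linear_def by blast
  then show ?thesis by (metis add.right_neutral add_left_cancel)
qed

lemma bdd_K_linear_nonneg_bound:
  assumes "bdd_K_linear sa sb f"
  obtains D where "D \<ge> 0" "\<And>x. norm (f x) \<le> D * norm x"
proof -
  obtain C where C: "\<And>x. norm (f x) \<le> C * norm x"
    using assms by (auto simp: bdd_K_linear_def)
  have "norm (f x) \<le> max C 0 * norm x" for x
    by (rule order_trans[OF C]) (simp add: mult_right_mono)
  then show ?thesis using that[of "max C 0"] by simp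
qed

lemma multilinear_comp_K_linear:
  fixes A :: "(nat \<Rightarrow> 'b::group_add) \<Rightarrow> 'c::plus" and f :: "'a::monoid_add \<Rightarrow> 'b"
  assumes A: "multilinear sb sc k A" and f: "K_linear sa sb f"
  shows "multilinear sa sc k (\<lambda>xs. A (\<lambda>i. f (xs i)))"
  unfolding multilinear_def
proof (intro conjI allI impI)
  have trunc: "A xs = A (\<lambda>i. if i < k then xs i else 0)" for xs
    using A by (simp add: multilinear_def)
  fix xs :: "nat \<Rightarrow> 'a"
  have "(\<lambda>i. f (if i < k then xs i else 0)) = (\<lambda>i. if i < k then f (xs i) else 0)"
    using K_linear_zero[OF f] by auto
  then show "A (\<lambda>i. f (xs i)) = A (\<lambda>i. f (if i < k then xs i else 0))"
    by (metis trunc)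
next
  fix i xs assume "i < k"
  then have Ai: "K_linear sb sc (\<lambda>y. A ((\<lambda>l. f (xs l))(i := y)))"
    using A by (simp add: multilinear_def)
  have "(\<lambda>l. f ((xs(i := y)) l)) = (\<lambda>l. f (xs l))(i := f y)" for y
    by auto
  with Ai f show "K_linear sa sc (\<lambda>y. A (\<lambda>l. f ((xs(i := y)) l)))"
    by (simp add: K_linear_def)
qed

lemma ml_bounded_comp:
  assumes A: "ml_bounded k A" and f: "\<And>x. norm (f x) \<le> D * norm x" and "D \<ge> 0"
  shows "ml_bounded k (\<lambda>xs. A (\<lambda>i. f (xs i)))"
proof -
  obtain C where C: "\<And>xs. norm (A xs) \<le> C * (\<Prod>i<k. norm (xs i))"
    using A by (auto simp: ml_bounded_def)
  have "norm (A (\<lambda>i. f (xs i))) \<le> (\<bar>C\<bar> * D ^ k) * (\<Prod>i<k. norm (xs i))" for xs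
  proof -
    have "norm (A (\<lambda>i. f (xs i))) \<le> \<bar>C\<bar> * (\<Prod>i<k. norm (f (xs i)))"
      by (rule order_trans[OF C]) (simp add: mult_right_mono prod_nonneg)
    also have "\<dots> \<le> \<bar>C\<bar> * (\<Prod>i<k. D * norm (xs i))"
      by (intro mult_left_mono prod_mono) (simp_all add: f)
    finally show ?thesis by (simp add: prod.distrib mult.assoc)
  qed
  then show ?thesis unfolding ml_bounded_def by blast
qed

lemma hpoly_comp_bdd_K_linear:
  assumes f: "bdd_K_linear sa sb f" and q: "hpoly sb sc k q"
  shows "hpoly sa sc k (\<lambda>x. q (f x))"
proof -
  obtain A where A: "multilinear sb sc k A" "ml_bounded k A" "\<And>x. q x = A (\<lambda>_. x)"
    using q unfolding hpoly_def by blast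
  obtain D where D: "D \<ge> 0" "\<And>x. norm (f x) \<le> D * norm x"
    using bdd_K_linear_nonneg_bound[OF f] by blast
  have "K_linear sa sb f" using f by (simp add: bdd_K_linear_def)
  then have "multilinear sa sc k (\<lambda>xs. A (\<lambda>i. f (xs i)))"
    and "ml_bounded k (\<lambda>xs. A (\<lambda>i. f (xs i)))"
    using multilinear_comp_K_linear[OF A(1)] ml_bounded_comp[OF A(2) D(2,1)] by auto
  then show ?thesis
    unfolding hpoly_def using A(3) by (intro exI[of _ "\<lambda>xs. A (\<lambda>i. f (xs i))"]) simp
qed

lemma Delta_one_Pspace:
  assumes "bdd_K_linear sa sb f" and "q \<in> Pspace sb sc k"
  shows "Delta 1 f q \<in> Pspace sa sc k"
  using assms hpoly_comp_bdd_K_linear by (simp add: Pspace_def)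

lemma hpoly_homogeneous:
  fixes p :: "'a::real_normed_vector \<Rightarrow> 'k::real_normed_field"
  assumes p: "hpoly sa (*) k p" and sa: "real_compatible sa"
  shows "p (t *\<^sub>R x) = of_real t ^ k * p x"
proof -
  obtain A where A: "multilinear sa (*) k A" and pA: "\<And>x. p x = A (\<lambda>_. x)"
    using p unfolding hpoly_def by blast
  let ?xs = "\<lambda>r i. if i < r then t *\<^sub>R x else x"
  have scaled: "A (?xs r) = of_real t ^ r * A (\<lambda>_. x)" if "r \<le> k" for r
    using that
  proof (induction r)
    case (Suc r)
    have "K_linear sa (*) (\<lambda>y. A ((?xs r)(r := y)))"
      using A Suc.prems by (simp add: multilinear_def)
    then have "A ((?xs r)(r := sa (of_real t) x)) = of_real t * A ((?xs r)(r := x))"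
      by (simp add: K_linear_def)
    moreover have "(?xs r)(r := sa (of_real t) x) = ?xs (Suc r)" "(?xs r)(r := x) = ?xs r"
      using sa by (auto simp: real_compatible_def)
    ultimately show ?case using Suc by simp
  qed simp
  have trunc: "A xs = A (\<lambda>i. if i < k then xs i else 0)" for xs
    using A by (simp add: multilinear_def)
  have "A (\<lambda>_. t *\<^sub>R x) = A (?xs k)"
    using trunc[of "\<lambda>_. t *\<^sub>R x"] trunc[of "?xs k"] by (simp cong: if_cong)
  then show ?thesis using scaled[of k] pA by simp
qed

lemma hpoly_norm_bound:
  assumes "hpoly sa sc k p"
  obtains C where "C \<ge> 0" "\<And>x. norm (p x) \<le> C * norm x ^ k"
proof -
  obtain A where A: "ml_bounded k A" and pA: "\<And>x. p x = A (\<lambda>_. x)"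
    using assms unfolding hpoly_def by blast
  obtain C where C: "\<And>xs. norm (A xs) \<le> C * (\<Prod>i<k. norm (xs i))"
    using A by (auto simp: ml_bounded_def)
  have "norm (p x) \<le> max C 0 * norm x ^ k" for x
  proof -
    have "norm (p x) \<le> C * norm x ^ k" using C[of "\<lambda>_. x"] pA[of x] by simp
    also have "\<dots> \<le> max C 0 * norm x ^ k" by (simp add: mult_right_mono)
    finally show ?thesis .
  qed
  then show ?thesis using that[of "max C 0"] by simp
qed

lemma polynorm_upper:
  assumes p: "hpoly sa sc k p" and x: "norm x \<le> 1"
  shows "norm (p x) \<le> polynorm p"
proof -
  obtain C where C: "C \<ge> 0" "\<And>x. norm (p x) \<le> C * norm x ^ k"
    using hpoly_norm_bound[OF p] by blast
  have "norm (p y) \<le> C" if "norm y \<le> 1" for y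
  proof -
    have "C * norm y ^ k \<le> C"
      by (rule mult_left_le[OF power_le_one[OF norm_ge_zero that] C(1)])
    then show ?thesis using C(2)[of y] by linarith
  qed
  then have "bdd_above ((\<lambda>x. norm (p x)) ` {x. norm x \<le> 1})"
    by (auto simp: bdd_above_def)
  then show ?thesis unfolding polynorm_def using x by (auto intro!: cSUP_upper)
qed

lemma polynorm_least:
  fixes p :: "'a::real_normed_vector \<Rightarrow> 'b::real_normed_vector"
  assumes "\<And>x. norm x \<le> 1 \<Longrightarrow> norm (p x) \<le> M"
  shows "polynorm p \<le> M"
proof -
  have "(0::'a) \<in> {x. norm x \<le> 1}" by simp
  then have "{x::'a. norm x \<le> 1} \<noteq> {}" by blast
  then show ?thesis unfolding polynorm_def by (rule cSUP_least) (simp add: assms)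
qed

lemma polynorm_nonneg:
  assumes "hpoly sa sc k p"
  shows "0 \<le> polynorm p"
proof -
  have "norm (p 0) \<le> polynorm p" by (rule polynorm_upper[OF assms]) simp
  then show ?thesis by (meson norm_ge_zero order_trans)
qed

lemma hpoly_norm_le_polynorm:
  fixes p :: "'a::real_normed_vector \<Rightarrow> 'k::real_normed_field"
  assumes p: "hpoly sa (*) k p" and sa: "real_compatible sa"
  shows "norm (p y) \<le> norm y ^ k * polynorm p"
proof -
  \<comment> \<open>also for \<open>y = 0\<close>, where \<open>z = 0\<close> because \<open>1 / 0 = 0\<close>\<close>
  define z where "z = (1 / norm y) *\<^sub>R y"
  have y: "norm y *\<^sub>R z = y" and z: "norm z \<le> 1"
    by (auto simp: z_def)
  have "p y = of_real (norm y) ^ k * p z"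
    using hpoly_homogeneous[OF p sa, of "norm y" z] by (simp only: y)
  then have "norm (p y) = norm y ^ k * norm (p z)"
    by (simp add: norm_mult norm_power)
  also have "\<dots> \<le> norm y ^ k * polynorm p"
    by (simp add: mult_left_mono polynorm_upper[OF p z])
  finally show ?thesis .
qed

lemma polynorm_le_of_open_ball:
  fixes p :: "'a::real_normed_vector \<Rightarrow> 'k::real_normed_field"
  assumes p: "hpoly sa (*) k p" and sa: "real_compatible sa"
    and M: "\<And>x. norm x < 1 \<Longrightarrow> norm (p x) \<le> M"
  shows "polynorm p \<le> M"
proof (rule polynorm_least)
  fix y :: 'a assume y: "norm y \<le> 1"
  have ev: "\<forall>\<^sub>F t in at_left (1::real). t ^ k * norm (p y) \<le> M"
    using eventually_at_left_real[OF zero_less_one]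
  proof (rule eventually_mono)
    fix t :: real assume t: "t \<in> {0<..<1}"
    have "norm (t *\<^sub>R y) = t * norm y" using t by simp
    also have "\<dots> \<le> t" using t y by (simp add: mult_left_le)
    also have "\<dots> < 1" using t by simp
    finally have "norm (t *\<^sub>R y) < 1" .
    then have "norm (p (t *\<^sub>R y)) \<le> M" by (rule M)
    then show "t ^ k * norm (p y) \<le> M"
      using t by (simp add: hpoly_homogeneous[OF p sa] norm_mult norm_power)
  qed
  have "((\<lambda>t. t ^ k * norm (p y)) \<longlongrightarrow> 1 ^ k * norm (p y)) (at_left (1::real))"
    by (intro tendsto_intros)
  from tendsto_upperbound[OF this ev trivial_limit_at_left_real]
  show "norm (p y) \<le> M" by simp
qed

lemma polynorm_comp_le:
  fixes q :: "'b::real_normed_vector \<Rightarrow> 'k::real_normed_field"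
  assumes q: "hpoly sb (*) k q" and sb: "real_compatible sb"
    and f: "\<And>x. norm (f x) \<le> D * norm x" and D: "D \<ge> 0"
  shows "polynorm (\<lambda>x. q (f x)) \<le> D ^ k * polynorm q"
proof (rule polynorm_least)
  fix x :: 'a assume "norm x \<le> 1"
  then have "norm (f x) \<le> D"
    using f[of x] mult_left_le[OF _ D] by (meson order_trans)
  then have "norm (f x) ^ k * polynorm q \<le> D ^ k * polynorm q"
    by (simp add: mult_right_mono power_mono polynorm_nonneg[OF q])
  then show "norm (q (f x)) \<le> D ^ k * polynorm q"
    using hpoly_norm_le_polynorm[OF q sb] order_trans by blast
qed

lemma polynorm_comp_isometry:
  assumes u: "bij u" and iso: "\<And>x. norm (u x) = norm x"
  shows "polynorm (\<lambda>x. p (u x)) = polynorm p"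
proof -
  have "y \<in> u ` {x. norm x \<le> 1}" if "norm y \<le> 1" for y
  proof
    show "y = u (inv u y)" using u by (simp add: bij_def surj_f_inv_f)
    with iso[of "inv u y"] that show "inv u y \<in> {x. norm x \<le> 1}" by simp
  qed
  then have ball: "u ` {x. norm x \<le> 1} = {y. norm y \<le> 1}"
    using iso by auto
  have "(\<lambda>x. norm (p (u x))) ` {x. norm x \<le> 1} = (\<lambda>y. norm (p y)) ` u ` {x. norm x \<le> 1}"
    by (simp add: image_image)
  then show ?thesis
    unfolding polynorm_def ball by simp
qed

lemma inj_on_Delta:
  assumes "inj (\<lambda>t::'k::monoid_mult. t ^ n)" and "surj P"
  shows "inj_on (Delta n P) (A :: ('b \<Rightarrow> 'k) set)"
proof (rule inj_onI)
  fix q1 q2 :: "'b \<Rightarrow> 'k" assume eq: "Delta n P q1 = Delta n P q2"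
  have "q1 (P x) = q2 (P x)" for x
  proof (rule injD[OF assms(1)])
    show "q1 (P x) ^ n = q2 (P x) ^ n" using fun_cong[OF eq, of x] by (simp add: Delta_def)
  qed
  show "q1 = q2"
  proof
    fix y
    obtain x where "y = P x" using \<open>surj P\<close> by blast
    then show "q1 y = q2 y" using \<open>q1 (P x) = q2 (P x)\<close> by simp
  qed
qed

lemma inj_odd_power_real:
  assumes "odd n"
  shows "inj (\<lambda>t::real. t ^ n)"
  by (rule inj_on_inverseI[where g = "root n"]) (simp add: odd_real_root_power_cancel assms)

lemma metric_injection_Delta_one:
  assumes j: "metric_surjection sa sb j" and sa: "real_compatible sa" and sb: "real_compatible sb"
  shows "metric_injection (Pspace sb (*) k :: ('e::real_normed_vector \<Rightarrow> 'k::real_normed_field) set)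
           (Pspace sa (*) k) (Delta 1 j)"
  unfolding metric_injection_def
proof (intro conjI ballI subsetI lin_on_Delta_one)
  have jb: "bdd_K_linear sa sb j" and ball: "j ` ball 0 1 = ball 0 1"
    using j by (auto simp: metric_surjection_def)
  show "p \<in> Pspace sa (*) k" if "p \<in> Delta 1 j ` Pspace sb (*) k" for p
    using that Delta_one_Pspace[OF jb] by blast
  fix q assume "q \<in> Pspace sb (*) k"
  then have q: "hpoly sb (*) k q" and qj: "hpoly sa (*) k (\<lambda>x. q (j x))"
    using hpoly_comp_bdd_K_linear[OF jb] by (auto simp: Pspace_def)
  have "polynorm (\<lambda>x. q (j x)) \<le> polynorm q"
  proof (rule polynorm_le_of_open_ball[OF qj sa])
    fix x :: 'a assume "norm x < 1"
    then have "j x \<in> ball 0 1" unfolding ball[symmetric] by simp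
    then show "norm (q (j x)) \<le> polynorm q" by (intro polynorm_upper[OF q]) simp
  qed
  moreover have "polynorm q \<le> polynorm (\<lambda>x. q (j x))"
  proof (rule polynorm_le_of_open_ball[OF q sb])
    fix y :: 'e assume "norm y < 1"
    then have "y \<in> j ` ball 0 1" unfolding ball by simp
    then obtain x where "x \<in> ball 0 1" "y = j x" by blast
    then show "norm (q y) \<le> polynorm (\<lambda>x. q (j x))" using polynorm_upper[OF qj, of x] by simp
  qed
  ultimately show "polynorm (Delta 1 j q) = polynorm q" by (simp add: Delta_one)
qed

lemma op_bounded_Delta_one:
  assumes u: "bdd_K_linear sa sb u" and sb: "real_compatible sb"
  shows "op_bounded (Pspace sb (*) k :: ('b::real_normed_vector \<Rightarrow> 'k::real_normed_field) set) (Delta 1 u)"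
proof -
  obtain D where D: "D \<ge> 0" "\<And>x. norm (u x) \<le> D * norm x"
    using bdd_K_linear_nonneg_bound[OF u] by blast
  have "\<forall>q \<in> Pspace sb (*) k. polynorm (Delta 1 u q) \<le> D ^ k * polynorm q"
    using polynorm_comp_le[OF _ sb D(2,1)] by (simp add: Pspace_def Delta_one)
  then show ?thesis
    unfolding op_bounded_def by blast
qed

lemma Delta_one_inverse:
  assumes u: "vec_iso sa sb u"
  shows "bij_betw (Delta 1 u) (Pspace sb sc k) (Pspace sa sc k)"
    and "p \<in> Pspace sa sc k \<Longrightarrow> inv_into (Pspace sb sc k) (Delta 1 u) p = Delta 1 (inv u) p"
proof -
  have ub: "bdd_K_linear sa sb u" and bu: "bij u" and vb: "bdd_K_linear sb sa (inv u)"
    using u by (auto simp: vec_iso_def)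
  have inj: "inj_on (Delta 1 u) (Pspace sb sc k)"
    using inj_on_Delta[of 1 u] bu by (simp add: bij_def)
  have pre: "Delta 1 (inv u) p \<in> Pspace sb sc k" "Delta 1 u (Delta 1 (inv u) p) = p"
    if "p \<in> Pspace sa sc k" for p
    using Delta_one_Pspace[OF vb that] bu by (simp_all add: bij_def inv_f_f)
  have "Delta 1 u ` Pspace sb sc k = Pspace sa sc k"
  proof
    show "Delta 1 u ` Pspace sb sc k \<subseteq> Pspace sa sc k"
      using Delta_one_Pspace[OF ub] by blast
    show "Pspace sa sc k \<subseteq> Delta 1 u ` Pspace sb sc k"
    proof
      fix p assume "p \<in> Pspace sa sc k"
      from pre[OF this] show "p \<in> Delta 1 u ` Pspace sb sc k" by (metis image_eqI)
    qed
  qed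
  with inj show "bij_betw (Delta 1 u) (Pspace sb sc k) (Pspace sa sc k)"
    by (simp add: bij_betw_def)
  show "inv_into (Pspace sb sc k) (Delta 1 u) p = Delta 1 (inv u) p" if "p \<in> Pspace sa sc k"
    using inv_into_f_eq[OF inj] pre[OF that] by blast
qed

lemma lin_iso_Delta_one:
  assumes u: "vec_iso sa sb u" and sa: "real_compatible sa" and sb: "real_compatible sb"
  shows "lin_iso (Pspace sb (*) k :: ('f::real_normed_vector \<Rightarrow> 'k::real_normed_field) set)
           (Pspace sa (*) k) (Delta 1 u)"
proof -
  have ub: "bdd_K_linear sa sb u" and vb: "bdd_K_linear sb sa (inv u)"
    using u by (auto simp: vec_iso_def)
  obtain C where "\<forall>p\<in>Pspace sa (*) k. polynorm (Delta 1 (inv u) p) \<le> C * polynorm p"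
    using op_bounded_Delta_one[OF vb sa] unfolding op_bounded_def by blast
  then have "op_bounded (Pspace sa (*) k) (inv_into (Pspace sb (*) k) (Delta 1 u))"
    unfolding op_bounded_def using Delta_one_inverse(2)[OF u] by metis
  then show ?thesis
    using Delta_one_inverse(1)[OF u, of "(*)" k] op_bounded_Delta_one[OF ub sb]
      lin_on_Delta_one[of "Pspace sb (*) k" u]
    by (simp add: lin_iso_def)
qed

lemma isometric_iso_Delta_one:
  assumes u: "vec_isometric_iso sa sb u" and sa: "real_compatible sa" and sb: "real_compatible sb"
  shows "isometric_iso (Pspace sb (*) k :: ('f::real_normed_vector \<Rightarrow> 'k::real_normed_field) set)
           (Pspace sa (*) k) (Delta 1 u)"
proof -
  have ui: "vec_iso sa sb u" and bu: "bij u" and iso: "\<And>x. norm (u x) = norm x"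
    using u by (auto simp: vec_isometric_iso_def vec_iso_def)
  have "polynorm (Delta 1 u p) = polynorm p" for p
    using polynorm_comp_isometry[OF bu iso] by (simp add: Delta_one)
  then show ?thesis
    unfolding isometric_iso_def using lin_iso_Delta_one[OF ui sa sb] by blast
qed

theorem mainTheorem6:
  shows "
  \<comment> \<open>(a), K = R: n = 1 or n odd\<close>
  (\<forall>(P :: 'e::banach \<Rightarrow> 'f::banach) (m::nat) (n::nat) (k::nat).
     hpoly scaleR scaleR m P \<and> surj P \<and> (n = 1 \<or> odd n) \<longrightarrow>
     inj_on (Delta n P) (Pspace scaleR (*) k :: ('f \<Rightarrow> real) set)) \<and>
  \<comment> \<open>(a), K = C: n = 1\<close>
  (\<forall>(P :: 'ce::cbanach \<Rightarrow> 'cf::cbanach) (m::nat) (n::nat) (k::nat).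
     hpoly cscale cscale m P \<and> surj P \<and> n = 1 \<longrightarrow>
     inj_on (Delta n P) (Pspace cscale (*) k :: ('cf \<Rightarrow> complex) set)) \<and>
  \<comment> \<open>(b), K = R\<close>
  (\<forall>(j :: 'g::banach \<Rightarrow> 'e) (k::nat).
     metric_surjection scaleR scaleR j \<longrightarrow>
     metric_injection (Pspace scaleR (*) k :: ('e \<Rightarrow> real) set) (Pspace scaleR (*) k) (Delta 1 j)) \<and>
  \<comment> \<open>(b), K = C\<close>
  (\<forall>(j :: 'cg::cbanach \<Rightarrow> 'ce) (k::nat).
     metric_surjection cscale cscale j \<longrightarrow>
     metric_injection (Pspace cscale (*) k :: ('ce \<Rightarrow> complex) set) (Pspace cscale (*) k) (Delta 1 j)) \<and>
  \<comment> \<open>(c), K = R\<close>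
  (\<forall>(u :: 'e \<Rightarrow> 'f) (k::nat).
     (vec_iso scaleR scaleR u \<longrightarrow>
        lin_iso (Pspace scaleR (*) k :: ('f \<Rightarrow> real) set) (Pspace scaleR (*) k) (Delta 1 u) \<and>
        (\<forall>p \<in> (Pspace scaleR (*) k :: ('e \<Rightarrow> real) set).
           inv_into (Pspace scaleR (*) k) (Delta 1 u) p = Delta 1 (inv u) p)) \<and>
     (vec_isometric_iso scaleR scaleR u \<longrightarrow>
        isometric_iso (Pspace scaleR (*) k :: ('f \<Rightarrow> real) set) (Pspace scaleR (*) k) (Delta 1 u) \<and>
        (\<forall>p \<in> (Pspace scaleR (*) k :: ('e \<Rightarrow> real) set).
           inv_into (Pspace scaleR (*) k) (Delta 1 u) p = Delta 1 (inv u) p))) \<and>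
  \<comment> \<open>(c), K = C\<close>
  (\<forall>(u :: 'ce \<Rightarrow> 'cf) (k::nat).
     (vec_iso cscale cscale u \<longrightarrow>
        lin_iso (Pspace cscale (*) k :: ('cf \<Rightarrow> complex) set) (Pspace cscale (*) k) (Delta 1 u) \<and>
        (\<forall>p \<in> (Pspace cscale (*) k :: ('ce \<Rightarrow> complex) set).
           inv_into (Pspace cscale (*) k) (Delta 1 u) p = Delta 1 (inv u) p)) \<and>
     (vec_isometric_iso cscale cscale u \<longrightarrow>
        isometric_iso (Pspace cscale (*) k :: ('cf \<Rightarrow> complex) set) (Pspace cscale (*) k) (Delta 1 u) \<and>
        (\<forall>p \<in> (Pspace cscale (*) k :: ('ce \<Rightarrow> complex) set).
           inv_into (Pspace cscale (*) k) (Delta 1 u) p = Delta 1 (inv u) p)))"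
proof -
  note R = real_compatible_scaleR and C = real_compatible_cscale
  have inj_one: "inj (\<lambda>t::'k::monoid_mult. t ^ 1)" by simp
  have iso: "vec_isometric_iso sa sb u \<Longrightarrow> vec_iso sa sb u" for sa sb u
    by (simp add: vec_isometric_iso_def)
  show ?thesis
    by (intro conjI allI impI ballI; (elim conjE disjE)?)
      (blast intro: inj_on_Delta inj_odd_power_real inj_one odd_one metric_injection_Delta_one[OF _ R R] metric_injection_Delta_one[OF _ C C]
        lin_iso_Delta_one[OF _ R R] lin_iso_Delta_one[OF _ C C] isometric_iso_Delta_one[OF _ R R] isometric_iso_Delta_one[OF _ C C]
        Delta_one_inverse(2) iso)+
qed

end
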